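(* Let $w_1, w_2 \geq 0$ with $w_1 + w_2 > 0$. Both for the class of all simultaneous two-player weighted congestion games with affine costs, proportional cost functions and player weights $w_1,w_2$, and for its subclass of network routing games, the price of anarchy (with respect to pure Nash equilibria) is equal to \[ 1 + w_1w_2 \frac{ w_1 + w_2 + \max(w_1,w_2) }{ w_1^3 + w_2^3 + w_1w_2 \min(w_1, w_2) }. \] Moreover, (for $w_1\ge w_2$) this value is attained by the following network routing game: vertices $a,b,c,d,e$; arcs $a\to b$, $a\to c$, $b\to d$, $b\to e$, $c\to d$, $c\to e$, all with $\alpha=0$ and with $\beta_{ab}=w_1w_2+w_2^2$, $\beta_{ac}=w_1w_2$, $\beta_{bd}=\beta_{be}=\beta_{cd}=0$, $\beta_{ce}=w_1^2+w_1w_2+w_2^2$; player 1 (weight $w_1$) routes from $a$ to $d$ and player 2 (weight $w_2$) routes from $a$ to $e$.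
   Context: A weighted two-player congestion game with affine costs consists of a finite set $R$ of resources, coefficients $\alpha_r,\beta_r \geq 0$ for each $r\in R$, two players $i=1,2$ with weights $w_i\ge 0$, and for each player $i$ a nonempty finite set $\mathcal{A}_i \subseteq 2^R$ of actions. For an action profile $A=(A_1,A_2)$ the load of $r$ is $x_r(A)=\sum_{j:\, r\in A_j} w_j$. With proportional costs, player $i$ pays $C_i(A)=w_i\sum_{r\in A_i}(\alpha_r+\beta_r x_r(A))$. The social cost is $C(A)=C_1(A)+C_2(A)$. In a network routing game, $R$ is the arc set of a directed graph, player $i$ has a source $s_i$ and sink $t_i$, and $\mathcal{A}_i$ is the set of arc sets of directed $s_i$–$t_i$ paths. A profile $(A_1^*,A_2^* )$ is a (pure) Nash equilibrium if no player can lower her cost by unilaterally changing her action. The price of anarchy of an instance is the maximum over Nash equilibria $A$ of $C(A)/\min_{A'} C(A')$; the price of anarchy of a class is the supremum over all instances in the class (with positive optimal social cost). *)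

theory Defs
  imports Main "HOL-Library.Extended_Real"
begin

record 'r cgame =
  res   :: "'r set"
  alpha :: "'r \<Rightarrow> real"
  beta  :: "'r \<Rightarrow> real"
  acts1 :: "'r set set"
  acts2 :: "'r set set"

definition valid_game :: "'r cgame \<Rightarrow> bool" where
  "valid_game G \<longleftrightarrow> finite (res G)
     \<and> (\<forall>r\<in>res G. alpha G r \<ge> 0 \<and> beta G r \<ge> 0)
     \<and> acts1 G \<noteq> {} \<and> finite (acts1 G) \<and> (\<forall>A\<in>acts1 G. A \<subseteq> res G)
     \<and> acts2 G \<noteq> {} \<and> finite (acts2 G) \<and> (\<forall>A\<in>acts2 G. A \<subseteq> res G)"

definition load :: "real \<Rightarrow> real \<Rightarrow> 'r set \<Rightarrow> 'r set \<Rightarrow> 'r \<Rightarrow> real" where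
  "load w1 w2 A1 A2 r = (if r \<in> A1 then w1 else 0) + (if r \<in> A2 then w2 else 0)"

definition cost1 :: "'r cgame \<Rightarrow> real \<Rightarrow> real \<Rightarrow> 'r set \<Rightarrow> 'r set \<Rightarrow> real" where
  "cost1 G w1 w2 A1 A2 = w1 * (\<Sum>r\<in>A1. alpha G r + beta G r * load w1 w2 A1 A2 r)"

definition cost2 :: "'r cgame \<Rightarrow> real \<Rightarrow> real \<Rightarrow> 'r set \<Rightarrow> 'r set \<Rightarrow> real" where
  "cost2 G w1 w2 A1 A2 = w2 * (\<Sum>r\<in>A2. alpha G r + beta G r * load w1 w2 A1 A2 r)"

definition social_cost :: "'r cgame \<Rightarrow> real \<Rightarrow> real \<Rightarrow> 'r set \<Rightarrow> 'r set \<Rightarrow> real" where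
  "social_cost G w1 w2 A1 A2 = cost1 G w1 w2 A1 A2 + cost2 G w1 w2 A1 A2"

definition is_NE :: "'r cgame \<Rightarrow> real \<Rightarrow> real \<Rightarrow> 'r set \<Rightarrow> 'r set \<Rightarrow> bool" where
  "is_NE G w1 w2 A1 A2 \<longleftrightarrow> A1 \<in> acts1 G \<and> A2 \<in> acts2 G
     \<and> (\<forall>B\<in>acts1 G. cost1 G w1 w2 A1 A2 \<le> cost1 G w1 w2 B A2)
     \<and> (\<forall>B\<in>acts2 G. cost2 G w1 w2 A1 A2 \<le> cost2 G w1 w2 A1 B)"

definition opt_cost :: "'r cgame \<Rightarrow> real \<Rightarrow> real \<Rightarrow> real" where
  "opt_cost G w1 w2 = Min {social_cost G w1 w2 A1 A2 | A1 A2. A1 \<in> acts1 G \<and> A2 \<in> acts2 G}"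

definition poa_inst :: "'r cgame \<Rightarrow> real \<Rightarrow> real \<Rightarrow> ereal" where
  "poa_inst G w1 w2 = Sup {ereal (social_cost G w1 w2 A1 A2 / opt_cost G w1 w2) | A1 A2. is_NE G w1 w2 A1 A2}"

text \<open>Directed (multi)graphs: arc set E with tail/head maps; simple directed s-t paths
  as lists of arcs with distinct visited vertices.\<close>
definition is_path :: "'e set \<Rightarrow> ('e \<Rightarrow> 'v) \<Rightarrow> ('e \<Rightarrow> 'v) \<Rightarrow> 'v \<Rightarrow> 'v \<Rightarrow> 'e list \<Rightarrow> bool" where
  "is_path E tl' hd' s t es \<longleftrightarrow> set es \<subseteq> E \<and>
     ((es = [] \<and> s = t) \<or>
      (es \<noteq> [] \<and> tl' (hd es) = s \<and> hd' (last es) = t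
        \<and> (\<forall>i. Suc i < length es \<longrightarrow> hd' (es ! i) = tl' (es ! Suc i))
        \<and> distinct (s # map hd' es)))"

definition path_actions :: "'e set \<Rightarrow> ('e \<Rightarrow> 'v) \<Rightarrow> ('e \<Rightarrow> 'v) \<Rightarrow> 'v \<Rightarrow> 'v \<Rightarrow> 'e set set" where
  "path_actions E tl' hd' s t = {set es | es. is_path E tl' hd' s t es}"

definition net_game :: "'e set \<Rightarrow> ('e \<Rightarrow> 'v) \<Rightarrow> ('e \<Rightarrow> 'v) \<Rightarrow> ('e \<Rightarrow> real) \<Rightarrow> ('e \<Rightarrow> real)
     \<Rightarrow> 'v \<Rightarrow> 'v \<Rightarrow> 'v \<Rightarrow> 'v \<Rightarrow> 'e cgame" where
  "net_game E tl' hd' a b s1 t1 s2 t2 =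
     \<lparr>res = E, alpha = a, beta = b,
      acts1 = path_actions E tl' hd' s1 t1, acts2 = path_actions E tl' hd' s2 t2\<rparr>"

text \<open>Class of all games (resources w.l.o.g. of type nat) and network routing games
  (arcs and vertices w.l.o.g. of type nat).\<close>
definition all_games :: "nat cgame set" where
  "all_games = {G. valid_game G}"

definition network_games :: "nat cgame set" where
  "network_games = {G. \<exists>E (tl' :: nat \<Rightarrow> nat) hd' a b s1 t1 s2 t2.
       G = net_game E tl' hd' a b s1 t1 s2 t2 \<and> valid_game G}"

definition poa_class :: "nat cgame set \<Rightarrow> real \<Rightarrow> real \<Rightarrow> ereal" where
  "poa_class C w1 w2 = (SUP G \<in> {G \<in> C. opt_cost G w1 w2 > 0}. poa_inst G w1 w2)"

definition poa_value :: "real \<Rightarrow> real \<Rightarrow> real" where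
  "poa_value w1 w2 = 1 + w1 * w2 * (w1 + w2 + max w1 w2)
                        / (w1 ^ 3 + w2 ^ 3 + w1 * w2 * min w1 w2)"

text \<open>The example network: vertices a,b,c,d,e = 0,1,2,3,4; arcs are pairs (u,v).\<close>
definition ex_arcs :: "(nat \<times> nat) set" where
  "ex_arcs = {(0,1), (0,2), (1,3), (1,4), (2,3), (2,4)}"

definition ex_beta :: "real \<Rightarrow> real \<Rightarrow> nat \<times> nat \<Rightarrow> real" where
  "ex_beta w1 w2 e =
     (if e = (0,1) then w1 * w2 + w2 ^ 2
      else if e = (0,2) then w1 * w2
      else if e = (2,4) then w1 ^ 2 + w1 * w2 + w2 ^ 2
      else 0)"

definition ex_game :: "real \<Rightarrow> real \<Rightarrow> (nat \<times> nat) cgame" where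
  "ex_game w1 w2 = net_game ex_arcs fst snd (\<lambda>_. 0) (ex_beta w1 w2) 0 3 0 4"

end

theory Submission
  imports Defs
begin

(* Let w1 \<ge> w2, D = w1^3 + w2^3 + w1 w2^2 and N = w1 w2 (2 w1 + w2), so that the claimed value is
   1 + N / D.  For an equilibrium A and any profile B, the quantity
     (w1 + w2) (D C(A) - (D + N) C(B)) + (D + N) w1 (C1(B1, A2) - C1(A))
       + D (w1 + w2) (C2(A1, B2) - C2(A))
   is a sum over resources of terms that are nonpositive for every affine latency with nonnegative
   coefficients, whichever of A1, A2, B1, B2 use the resource.  The Nash conditions make the last
   two summands nonnegative, hence D C(A) \<le> (D + N) C(B).  In the five-vertex network the
   equilibrium (a-b-d, a-c-e) costs w2 (D + N) and the profile (a-c-d, a-b-e) costs w2 D; for w2 = 0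
   a single shared arc attains the value 1.  The case w1 < w2 follows by exchanging the players. *)

definition poa_num :: "real \<Rightarrow> real \<Rightarrow> real" where
  "poa_num p q = p * q * (2 * p + q)"

definition poa_den :: "real \<Rightarrow> real \<Rightarrow> real" where
  "poa_den p q = p ^ 3 + q ^ 3 + p * q ^ 2"

lemma poa_value_eq:
  assumes "w2 \<le> w1"
  shows "poa_value w1 w2 = 1 + poa_num w1 w2 / poa_den w1 w2"
  using assms
  by (simp add: poa_value_def poa_num_def poa_den_def max_def min_def power2_eq_square algebra_simps)

lemma poa_value_commute: "poa_value w1 w2 = poa_value w2 w1"
  by (simp add: poa_value_def max.commute min.commute algebra_simps)

lemma poa_num_nonneg: "0 \<le> p \<Longrightarrow> 0 \<le> q \<Longrightarrow> 0 \<le> poa_num p q"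
  by (simp add: poa_num_def)

lemma poa_den_nonneg: "0 \<le> p \<Longrightarrow> 0 \<le> q \<Longrightarrow> 0 \<le> poa_den p q"
  by (simp add: poa_den_def)

lemma poa_den_pos: "0 < p \<Longrightarrow> 0 \<le> q \<Longrightarrow> 0 < poa_den p q"
  by (simp add: poa_den_def add_pos_nonneg)

lemma poa_slack_nonneg:
  assumes "0 \<le> q" "q \<le> p"
  shows "0 \<le> poa_num p q * p - poa_den p q * q"
proof -
  have "poa_num p q * p - poa_den p q * q = q * (p + q) * (p\<^sup>2 - q\<^sup>2)"
    unfolding poa_num_def poa_den_def by algebra
  moreover have "q\<^sup>2 \<le> p\<^sup>2" using assms by (simp add: power_mono)
  ultimately show ?thesis using assms by simp
qed

lemma resource_linear_part_nonpos:
  fixes p q x1 x2 y1 y2 :: real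
  assumes "0 \<le> q" "q \<le> p" "0 \<le> x1" "0 \<le> y1" "0 \<le> y2"
  defines "D \<equiv> poa_den p q" and "N \<equiv> poa_num p q"
  shows "(p + q) * (D * (x1 + x2) - (D + N) * (y1 + y2)) + (D + N) * p * (y1 - x1)
      + D * (p + q) * (y2 - x2) \<le> 0"
proof -
  have "(p + q) * (D * (x1 + x2) - (D + N) * (y1 + y2)) + (D + N) * p * (y1 - x1)
      + D * (p + q) * (y2 - x2) = - ((N * p - D * q) * x1 + (D + N) * q * y1 + (p + q) * N * y2)"
    by algebra
  moreover have "0 \<le> N * p - D * q" "0 \<le> D" "0 \<le> N"
    using poa_slack_nonneg[of q p] poa_num_nonneg[of p q] poa_den_nonneg[of p q] assms
    by (auto simp: D_def N_def)
  then have "0 \<le> (N * p - D * q) * x1 + (D + N) * q * y1 + (p + q) * N * y2"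
    using assms by (intro add_nonneg_nonneg mult_nonneg_nonneg) simp_all
  ultimately show ?thesis by linarith
qed

lemma resource_quadratic_part_nonpos:
  fixes p q x1 x2 y1 y2 :: real
  assumes q: "0 \<le> q" "q \<le> p"
    and x: "x1 \<in> {0, p}" "x2 \<in> {0, q}" and y: "y1 \<in> {0, p}" "y2 \<in> {0, q}"
  defines "D \<equiv> poa_den p q" and "N \<equiv> poa_num p q"
  shows "(p + q) * (D * (x1 + x2)\<^sup>2 - (D + N) * (y1 + y2)\<^sup>2)
      + (D + N) * p * (y1 * (y1 + x2) - x1 * (x1 + x2))
      + D * (p + q) * (y2 * (x1 + y2) - x2 * (x1 + x2)) \<le> 0"
proof -
  define K where "K = N * p - D * q"
  have "K \<ge> 0" "D \<ge> 0" "N \<ge> 0"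
    using poa_slack_nonneg[of q p] poa_num_nonneg[of p q] poa_den_nonneg[of p q] q
    by (auto simp: K_def D_def N_def)
  have nonneg: "x1 \<ge> 0" "x2 \<ge> 0" "y1 \<ge> 0" "y2 \<ge> 0" using x y q by auto
  have "y1 * (p * x2 - q * y1) \<le> 0"
    using x y q by auto
  then have term1: "(D + N) * y1 * (p * x2 - q * y1) \<le> 0"
    using \<open>D \<ge> 0\<close> \<open>N \<ge> 0\<close> by (metis mult.assoc mult_nonneg_nonpos add_nonneg_nonneg)
  have term2: "x1 * (D * (p + q) * y2 - K * (x1 + x2)) - (p + q) * N * y2\<^sup>2 \<le> 0"
  proof (cases "x1 = p \<and> y2 = q")
    case True
    (* Tight for x2 = 0: this is the case that determines D and N. *)
    have "p * (D * (p + q) * q - K * p) = (p + q) * N * q\<^sup>2"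
      unfolding K_def D_def N_def poa_den_def poa_num_def by algebra
    with True have "x1 * (D * (p + q) * y2 - K * (x1 + x2)) - (p + q) * N * y2\<^sup>2 = - K * p * x2"
      by (simp add: algebra_simps power2_eq_square)
    then show ?thesis using \<open>K \<ge> 0\<close> q nonneg by simp
  next
    case False
    then have "x1 = 0 \<or> y2 = 0" using x y by auto
    then show ?thesis using \<open>K \<ge> 0\<close> \<open>N \<ge> 0\<close> q nonneg by auto
  qed
  have term3: "(p + q) * (D + N) * y1 * y2 \<ge> 0"
    using \<open>D \<ge> 0\<close> \<open>N \<ge> 0\<close> q nonneg by simp
  have "(p + q) * (D * (x1 + x2)\<^sup>2 - (D + N) * (y1 + y2)\<^sup>2)
      + (D + N) * p * (y1 * (y1 + x2) - x1 * (x1 + x2))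
      + D * (p + q) * (y2 * (x1 + y2) - x2 * (x1 + x2))
      = (D + N) * y1 * (p * x2 - q * y1)
        + (x1 * (D * (p + q) * y2 - K * (x1 + x2)) - (p + q) * N * y2\<^sup>2)
        - 2 * ((p + q) * (D + N) * y1 * y2)"
    unfolding K_def by algebra
  then show ?thesis using term1 term2 term3 by linarith
qed

lemma affine_resource_inequality:
  fixes p q a b x1 x2 y1 y2 :: real
  assumes "0 \<le> q" "q \<le> p" and "0 \<le> a" "0 \<le> b"
    and "x1 \<in> {0, p}" "x2 \<in> {0, q}" "y1 \<in> {0, p}" "y2 \<in> {0, q}"
  defines "D \<equiv> poa_den p q" and "N \<equiv> poa_num p q" and "lat \<equiv> \<lambda>z. a + b * z"
  shows "(p + q) * (D * ((x1 + x2) * lat (x1 + x2)) - (D + N) * ((y1 + y2) * lat (y1 + y2)))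
       + (D + N) * p * (y1 * lat (y1 + x2) - x1 * lat (x1 + x2))
       + D * (p + q) * (y2 * lat (x1 + y2) - x2 * lat (x1 + x2)) \<le> 0"
proof -
  have "(p + q) * (D * ((x1 + x2) * lat (x1 + x2)) - (D + N) * ((y1 + y2) * lat (y1 + y2)))
       + (D + N) * p * (y1 * lat (y1 + x2) - x1 * lat (x1 + x2))
       + D * (p + q) * (y2 * lat (x1 + y2) - x2 * lat (x1 + x2))
     = a * ((p + q) * (D * (x1 + x2) - (D + N) * (y1 + y2)) + (D + N) * p * (y1 - x1)
      + D * (p + q) * (y2 - x2))
     + b * ((p + q) * (D * (x1 + x2)\<^sup>2 - (D + N) * (y1 + y2)\<^sup>2)
      + (D + N) * p * (y1 * (y1 + x2) - x1 * (x1 + x2))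
      + D * (p + q) * (y2 * (x1 + y2) - x2 * (x1 + x2)))"
    unfolding lat_def by algebra
  also have "\<dots> \<le> 0"
    using assms resource_linear_part_nonpos[of q p x1 y1 y2 x2]
      resource_quadratic_part_nonpos[of q p x1 x2 y1 y2]
    by (force simp: add_nonpos_nonpos mult_nonneg_nonpos)
  finally show ?thesis .
qed

lemma cost1_eq_sum:
  assumes "finite R" "X \<subseteq> R"
  shows "cost1 G w1 w2 X Y
    = (\<Sum>r\<in>R. (if r \<in> X then w1 else 0) * (alpha G r + beta G r * load w1 w2 X Y r))"
  unfolding cost1_def sum_distrib_left
  by (rule sum.mono_neutral_cong_left) (use assms in auto)

lemma cost2_eq_sum:
  assumes "finite R" "Y \<subseteq> R"
  shows "cost2 G w1 w2 X Y
    = (\<Sum>r\<in>R. (if r \<in> Y then w2 else 0) * (alpha G r + beta G r * load w1 w2 X Y r))"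
  unfolding cost2_def sum_distrib_left
  by (rule sum.mono_neutral_cong_left) (use assms in auto)

lemma NE_social_cost_le:
  fixes G :: "'r cgame"
  assumes G: "valid_game G" and w: "0 \<le> w2" "w2 \<le> w1" "0 < w1"
    and NE: "is_NE G w1 w2 A1 A2" and B: "B1 \<in> acts1 G" "B2 \<in> acts2 G"
  shows "social_cost G w1 w2 A1 A2 \<le> poa_value w1 w2 * social_cost G w1 w2 B1 B2"
proof -
  define D where "D = poa_den w1 w2"
  define N where "N = poa_num w1 w2"
  define u where "u X (r :: 'r) = (if r \<in> X then w1 else 0)" for X r
  define v where "v Y (r :: 'r) = (if r \<in> Y then w2 else 0)" for Y r
  define lat where "lat r z = alpha G r + beta G r * z" for r z
  let ?R = "res G"
  have "D > 0" "N \<ge> 0"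
    using w poa_den_pos poa_num_nonneg by (simp_all add: D_def N_def)
  have fin: "finite ?R" and nonneg: "\<And>r. r \<in> ?R \<Longrightarrow> 0 \<le> alpha G r \<and> 0 \<le> beta G r"
    using G by (simp_all add: valid_game_def)
  have sub: "A1 \<subseteq> ?R" "A2 \<subseteq> ?R" "B1 \<subseteq> ?R" "B2 \<subseteq> ?R"
    using G NE B by (auto simp: valid_game_def is_NE_def)
  have load: "load w1 w2 X Y r = u X r + v Y r" for X Y r
    by (simp add: load_def u_def v_def)
  have c1: "cost1 G w1 w2 X Y = (\<Sum>r\<in>?R. u X r * lat r (u X r + v Y r))" if "X \<subseteq> ?R" for X Y
    using cost1_eq_sum[OF fin that] by (simp add: load u_def lat_def)
  have c2: "cost2 G w1 w2 X Y = (\<Sum>r\<in>?R. v Y r * lat r (u X r + v Y r))" if "Y \<subseteq> ?R" for X Y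
    using cost2_eq_sum[OF fin that] by (simp add: load v_def lat_def)
  have "(\<Sum>r\<in>?R. (w1 + w2) * (D * ((u A1 r + v A2 r) * lat r (u A1 r + v A2 r))
        - (D + N) * ((u B1 r + v B2 r) * lat r (u B1 r + v B2 r)))
       + (D + N) * w1 * (u B1 r * lat r (u B1 r + v A2 r) - u A1 r * lat r (u A1 r + v A2 r))
       + D * (w1 + w2) * (v B2 r * lat r (u A1 r + v B2 r) - v A2 r * lat r (u A1 r + v A2 r))) \<le> 0"
    (is "?S \<le> 0")
    unfolding D_def N_def lat_def
    by (rule sum_nonpos, rule affine_resource_inequality) (use w nonneg in \<open>auto simp: u_def v_def\<close>)
  moreover have "?S = (w1 + w2) * (D * social_cost G w1 w2 A1 A2 - (D + N) * social_cost G w1 w2 B1 B2)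
      + (D + N) * w1 * (cost1 G w1 w2 B1 A2 - cost1 G w1 w2 A1 A2)
      + D * (w1 + w2) * (cost2 G w1 w2 A1 B2 - cost2 G w1 w2 A1 A2)"
    unfolding social_cost_def c1[OF sub(1)] c1[OF sub(3)] c2[OF sub(2)] c2[OF sub(4)]
    by (simp add: sum.distrib sum_subtractf sum_distrib_left algebra_simps)
  moreover have "0 \<le> (D + N) * w1 * (cost1 G w1 w2 B1 A2 - cost1 G w1 w2 A1 A2)"
    "0 \<le> D * (w1 + w2) * (cost2 G w1 w2 A1 B2 - cost2 G w1 w2 A1 A2)"
    using NE B \<open>D > 0\<close> \<open>N \<ge> 0\<close> w by (auto intro!: mult_nonneg_nonneg simp: is_NE_def)
  ultimately have "(w1 + w2) * (D * social_cost G w1 w2 A1 A2 - (D + N) * social_cost G w1 w2 B1 B2) \<le> 0"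
    by linarith
  then have "D * social_cost G w1 w2 A1 A2 \<le> (D + N) * social_cost G w1 w2 B1 B2"
    using w by (simp add: mult_le_0_iff)
  then show ?thesis
    using \<open>D > 0\<close> unfolding poa_value_eq[OF w(2)] D_def[symmetric] N_def[symmetric]
    by (simp add: field_simps)
qed

lemma opt_cost_eq_Min_image:
  "opt_cost G w1 w2 = Min ((\<lambda>(X, Y). social_cost G w1 w2 X Y) ` (acts1 G \<times> acts2 G))"
  unfolding opt_cost_def by (rule arg_cong[where f = Min]) auto

lemma opt_cost_attained:
  assumes "valid_game G"
  obtains B1 B2 where "B1 \<in> acts1 G" "B2 \<in> acts2 G" "opt_cost G w1 w2 = social_cost G w1 w2 B1 B2"
proof -
  have "finite (acts1 G \<times> acts2 G)" "acts1 G \<times> acts2 G \<noteq> {}"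
    using assms by (auto simp: valid_game_def)
  then have "opt_cost G w1 w2 \<in> (\<lambda>(X, Y). social_cost G w1 w2 X Y) ` (acts1 G \<times> acts2 G)"
    unfolding opt_cost_eq_Min_image by (intro Min_in) auto
  then show ?thesis using that by auto
qed

lemma opt_cost_le:
  assumes "valid_game G" "A1 \<in> acts1 G" "A2 \<in> acts2 G"
  shows "opt_cost G w1 w2 \<le> social_cost G w1 w2 A1 A2"
  unfolding opt_cost_eq_Min_image using assms by (intro Min_le) (auto simp: valid_game_def)

lemma poa_inst_le_poa_value:
  assumes G: "valid_game G" and w: "0 \<le> w2" "w2 \<le> w1" "0 < w1" and opt: "opt_cost G w1 w2 > 0"
  shows "poa_inst G w1 w2 \<le> ereal (poa_value w1 w2)"
  unfolding poa_inst_def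
proof (rule Sup_least, clarify)
  fix A1 A2 assume NE: "is_NE G w1 w2 A1 A2"
  obtain B1 B2 where B: "B1 \<in> acts1 G" "B2 \<in> acts2 G"
    and opt_eq: "opt_cost G w1 w2 = social_cost G w1 w2 B1 B2"
    using opt_cost_attained[OF G] .
  have "social_cost G w1 w2 A1 A2 \<le> poa_value w1 w2 * opt_cost G w1 w2"
    unfolding opt_eq by (rule NE_social_cost_le[OF G w NE B])
  then show "ereal (social_cost G w1 w2 A1 A2 / opt_cost G w1 w2) \<le> ereal (poa_value w1 w2)"
    using opt by (simp add: pos_divide_le_eq)
qed

lemma NE_ratio_le_poa_inst:
  assumes "is_NE G w1 w2 A1 A2"
  shows "ereal (social_cost G w1 w2 A1 A2 / opt_cost G w1 w2) \<le> poa_inst G w1 w2"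
  unfolding poa_inst_def using assms by (intro Sup_upper) blast

lemma poa_class_le:
  assumes "\<And>G. G \<in> C \<Longrightarrow> valid_game G" "0 \<le> w2" "w2 \<le> w1" "0 < w1"
  shows "poa_class C w1 w2 \<le> ereal (poa_value w1 w2)"
  unfolding poa_class_def
proof (rule SUP_least)
  fix G assume "G \<in> {G \<in> C. opt_cost G w1 w2 > 0}"
  then show "poa_inst G w1 w2 \<le> ereal (poa_value w1 w2)"
    using assms by (auto intro: poa_inst_le_poa_value)
qed

lemma poa_inst_le_poa_class:
  assumes "G \<in> C" "opt_cost G w1 w2 > 0"
  shows "poa_inst G w1 w2 \<le> poa_class C w1 w2"
  unfolding poa_class_def using assms by (auto intro: SUP_upper)

definition swap_players :: "'r cgame \<Rightarrow> 'r cgame" where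
  "swap_players G = G\<lparr>acts1 := acts2 G, acts2 := acts1 G\<rparr>"

lemma swap_players_swap_players [simp]: "swap_players (swap_players G) = G"
  by (simp add: swap_players_def)

lemma valid_game_swap_players [simp]: "valid_game (swap_players G) \<longleftrightarrow> valid_game G"
  by (auto simp: valid_game_def swap_players_def)

lemma load_commute: "load w1 w2 A1 A2 = load w2 w1 A2 A1"
  by (auto simp: load_def fun_eq_iff)

lemma cost1_swap_players: "cost1 (swap_players G) w1 w2 A1 A2 = cost2 G w2 w1 A2 A1"
  by (simp add: cost1_def cost2_def swap_players_def load_commute)

lemma cost2_swap_players: "cost2 (swap_players G) w1 w2 A1 A2 = cost1 G w2 w1 A2 A1"
  by (simp add: cost1_def cost2_def swap_players_def load_commute)

lemma social_cost_swap_players: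
  "social_cost (swap_players G) w1 w2 A1 A2 = social_cost G w2 w1 A2 A1"
  by (simp add: social_cost_def cost1_swap_players cost2_swap_players)

lemma is_NE_swap_players: "is_NE (swap_players G) w1 w2 A1 A2 \<longleftrightarrow> is_NE G w2 w1 A2 A1"
  unfolding is_NE_def cost1_swap_players cost2_swap_players by (auto simp: swap_players_def)

lemma opt_cost_swap_players: "opt_cost (swap_players G) w1 w2 = opt_cost G w2 w1"
  unfolding opt_cost_def social_cost_swap_players
  by (rule arg_cong[where f = Min]) (auto simp: swap_players_def)

lemma poa_inst_swap_players: "poa_inst (swap_players G) w1 w2 = poa_inst G w2 w1"
  unfolding poa_inst_def social_cost_swap_players opt_cost_swap_players is_NE_swap_players
  by (rule arg_cong[where f = Sup]) blast

lemma poa_class_swap_players: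
  assumes "\<And>G. G \<in> C \<Longrightarrow> swap_players G \<in> C"
  shows "poa_class C w1 w2 = poa_class C w2 w1"
proof -
  have "{G \<in> C. opt_cost G w1 w2 > 0} = swap_players ` {G \<in> C. opt_cost G w2 w1 > 0}"
  proof
    show "{G \<in> C. opt_cost G w1 w2 > 0} \<subseteq> swap_players ` {G \<in> C. opt_cost G w2 w1 > 0}"
    proof
      fix G assume "G \<in> {G \<in> C. opt_cost G w1 w2 > 0}"
      then have "swap_players G \<in> {G \<in> C. opt_cost G w2 w1 > 0}"
        using assms by (simp add: opt_cost_swap_players)
      then show "G \<in> swap_players ` {G \<in> C. opt_cost G w2 w1 > 0}"
        by (metis image_eqI swap_players_swap_players)
    qed
    show "swap_players ` {G \<in> C. opt_cost G w2 w1 > 0} \<subseteq> {G \<in> C. opt_cost G w1 w2 > 0}"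
      using assms by (auto simp: opt_cost_swap_players)
  qed
  then show ?thesis
    unfolding poa_class_def by (simp add: image_comp comp_def poa_inst_swap_players)
qed

lemma swap_players_all_games: "G \<in> all_games \<Longrightarrow> swap_players G \<in> all_games"
  by (simp add: all_games_def)

lemma swap_players_net_game:
  "swap_players (net_game E tl' hd' a b s1 t1 s2 t2) = net_game E tl' hd' a b s2 t2 s1 t1"
  by (simp add: swap_players_def net_game_def)

lemma swap_players_network_games:
  assumes "G \<in> network_games"
  shows "swap_players G \<in> network_games"
proof -
  obtain E and tl' hd' :: "nat \<Rightarrow> nat" and a b s1 t1 s2 t2
    where G: "G = net_game E tl' hd' a b s1 t1 s2 t2" "valid_game G"
    using assms unfolding network_games_def by blast
  have "swap_players G = net_game E tl' hd' a b s2 t2 s1 t1"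
    using G(1) by (simp add: swap_players_net_game)
  moreover have "valid_game (swap_players G)"
    using G(2) by simp
  ultimately show ?thesis
    unfolding network_games_def by blast
qed

locale example_network =
  fixes E :: "'e set" and tl' hd' :: "'e \<Rightarrow> nat" and eab eac ebd ebe ecd ece :: 'e
  assumes arcs: "E = {eab, eac, ebd, ebe, ecd, ece}"
    and tails: "tl' eab = 0" "tl' eac = 0" "tl' ebd = 1" "tl' ebe = 1" "tl' ecd = 2" "tl' ece = 2"
    and heads: "hd' eab = 1" "hd' eac = 2" "hd' ebd = 3" "hd' ebe = 4" "hd' ecd = 3" "hd' ece = 4"
begin

lemma path_action_to_sink_has_two_arcs:
  assumes t: "t \<in> {3, 4}" and A: "A \<in> path_actions E tl' hd' 0 t"
  obtains x y where "A = {x, y}" "x \<in> E" "y \<in> E" "tl' x = 0" "hd' x = tl' y" "hd' y = t"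
proof -
  obtain es where A_eq: "A = set es" and P: "is_path E tl' hd' 0 t es"
    using A by (auto simp: path_actions_def)
  from P t have sub: "set es \<subseteq> E" and ne: "es \<noteq> []" and first: "tl' (hd es) = 0"
    and last: "hd' (last es) = t" and chain: "\<forall>i. Suc i < length es \<longrightarrow> hd' (es ! i) = tl' (es ! Suc i)"
    unfolding is_path_def by auto
  obtain x xs where es: "es = x # xs" using ne by (cases es) auto
  have x: "x \<in> E" "tl' x = 0" "hd' x \<in> {1, 2}" using sub first es arcs tails heads by auto
  then obtain y ys where xs: "xs = y # ys" using last es t by (cases xs) auto
  have y: "y \<in> E" "hd' x = tl' y" using sub chain[rule_format, of 0] es xs by auto
  then have "hd' y \<in> {3, 4}" using x arcs tails heads by auto
  have "ys = []"
  proof (rule ccontr)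
    assume "ys \<noteq> []"
    then obtain z zs where ys: "ys = z # zs" by (cases ys) auto
    have "z \<in> E" "hd' y = tl' z" using sub chain[rule_format, of 1] es xs ys by auto
    with \<open>hd' y \<in> {3, 4}\<close> show False using arcs tails by auto
  qed
  then show ?thesis using that A_eq es xs x y last by auto
qed

lemma two_arcs_path_action:
  assumes "t \<in> {3, 4}" "x \<in> E" "y \<in> E" "tl' x = 0" "hd' x = tl' y" "hd' y = t"
  shows "{x, y} \<in> path_actions E tl' hd' 0 t"
proof -
  have "hd' x \<in> {1, 2}" using assms arcs tails heads by auto
  then have "is_path E tl' hd' 0 t [x, y]"
    using assms unfolding is_path_def by (auto simp: less_Suc_eq)
  then have "set [x, y] \<in> path_actions E tl' hd' 0 t"
    unfolding path_actions_def by blast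
  then show ?thesis by simp
qed

lemma arcs_from_source:
  assumes "x \<in> E" "y \<in> E" "tl' x = 0" "hd' x = tl' y"
  shows "x = eab \<and> y \<in> {ebd, ebe} \<or> x = eac \<and> y \<in> {ecd, ece}"
proof -
  have "x = eab \<or> x = eac" using assms(1,3) arcs tails by auto
  then show ?thesis using assms(2,4) arcs tails heads by auto
qed

lemma path_actions_to_3: "path_actions E tl' hd' 0 3 = {{eab, ebd}, {eac, ecd}}"
proof (intro equalityI subsetI)
  fix A assume "A \<in> path_actions E tl' hd' 0 3"
  then show "A \<in> {{eab, ebd}, {eac, ecd}}"
    by (rule path_action_to_sink_has_two_arcs[rotated]) (use arcs_from_source heads in fastforce)+
qed (use two_arcs_path_action[of 3 eab ebd] two_arcs_path_action[of 3 eac ecd]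
    in \<open>auto simp: arcs tails heads\<close>)

lemma path_actions_to_4: "path_actions E tl' hd' 0 4 = {{eab, ebe}, {eac, ece}}"
proof (intro equalityI subsetI)
  fix A assume "A \<in> path_actions E tl' hd' 0 4"
  then show "A \<in> {{eab, ebe}, {eac, ece}}"
    by (rule path_action_to_sink_has_two_arcs[rotated]) (use arcs_from_source heads in fastforce)+
qed (use two_arcs_path_action[of 4 eab ebe] two_arcs_path_action[of 4 eac ece]
    in \<open>auto simp: arcs tails heads\<close>)

end

locale example_instance = example_network +
  fixes w1 w2 :: real and b :: "'e \<Rightarrow> real"
  assumes weights: "0 < w2" "w2 \<le> w1"
    and betas: "b eab = w1 * w2 + w2\<^sup>2" "b eac = w1 * w2" "b ebd = 0" "b ebe = 0" "b ecd = 0"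
      "b ece = w1\<^sup>2 + w1 * w2 + w2\<^sup>2"
begin

abbreviation game :: "'e cgame" where
  "game \<equiv> net_game E tl' hd' (\<lambda>_. 0) b 0 3 0 4"

lemma game_simps:
  "res game = E" "alpha game = (\<lambda>_. 0)" "beta game = b"
  "acts1 game = {{eab, ebd}, {eac, ecd}}" "acts2 game = {{eab, ebe}, {eac, ece}}"
  by (simp_all add: net_game_def path_actions_to_3 path_actions_to_4)

lemma arcs_distinct:
  "eab \<noteq> eac" "eab \<noteq> ebd" "eab \<noteq> ebe" "eab \<noteq> ecd" "eab \<noteq> ece"
  "eac \<noteq> ebd" "eac \<noteq> ebe" "eac \<noteq> ecd" "eac \<noteq> ece"
  "ebd \<noteq> ebe" "ebd \<noteq> ecd" "ebd \<noteq> ece" "ebe \<noteq> ecd" "ebe \<noteq> ece" "ecd \<noteq> ece"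
  using tails heads by auto

lemma valid_game_game: "valid_game game"
proof -
  have "\<forall>r\<in>E. 0 \<le> b r" using arcs betas weights by auto
  then show ?thesis unfolding valid_game_def game_simps using arcs by auto
qed

lemmas cost_simps = social_cost_def cost1_def cost2_def load_def game_simps betas
  arcs_distinct arcs_distinct[symmetric]

lemma social_cost_game:
  "social_cost game w1 w2 {eab, ebd} {eab, ebe} = w2 * (w1 + w2) ^ 3"
  "social_cost game w1 w2 {eab, ebd} {eac, ece} = w2 * (poa_den w1 w2 + poa_num w1 w2)"
  "social_cost game w1 w2 {eac, ecd} {eab, ebe} = w2 * poa_den w1 w2"
  "social_cost game w1 w2 {eac, ecd} {eac, ece} = w1 * w2 * (w1 + w2)\<^sup>2 + w2\<^sup>2 * (w1\<^sup>2 + w1 * w2 + w2\<^sup>2)"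
  by (simp_all add: cost_simps poa_den_def poa_num_def power2_eq_square power3_eq_cube algebra_simps)

lemma is_NE_game: "is_NE game w1 w2 {eab, ebd} {eac, ece}"
proof -
  have "cost1 game w1 w2 {eab, ebd} {eac, ece} = cost1 game w1 w2 {eac, ecd} {eac, ece}"
    "cost2 game w1 w2 {eab, ebd} {eac, ece} = cost2 game w1 w2 {eab, ebd} {eab, ebe}"
    by (simp_all add: cost_simps power2_eq_square algebra_simps)
  then show ?thesis unfolding is_NE_def game_simps by auto
qed

lemma opt_cost_game_pos: "opt_cost game w1 w2 > 0"
proof -
  obtain B1 B2 where "B1 \<in> acts1 game" "B2 \<in> acts2 game" "opt_cost game w1 w2 = social_cost game w1 w2 B1 B2"
    using opt_cost_attained[OF valid_game_game] .
  moreover have "0 < w1" "0 < poa_den w1 w2" "0 \<le> poa_num w1 w2"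
    using weights poa_den_pos[of w1 w2] poa_num_nonneg[of w1 w2] by simp_all
  ultimately show ?thesis
    using weights by (auto simp: game_simps social_cost_game add_pos_pos)
qed

lemma attains_poa_value:
  "valid_game game \<and> opt_cost game w1 w2 > 0 \<and> poa_inst game w1 w2 = ereal (poa_value w1 w2)"
proof -
  have "0 < w1" "0 < poa_den w1 w2" "0 \<le> poa_num w1 w2"
    using weights poa_den_pos[of w1 w2] poa_num_nonneg[of w1 w2] by simp_all
  have "poa_value w1 w2
      = social_cost game w1 w2 {eab, ebd} {eac, ece} / social_cost game w1 w2 {eac, ecd} {eab, ebe}"
    using weights \<open>0 < poa_den w1 w2\<close> unfolding social_cost_game poa_value_eq[OF weights(2)]
    by (simp add: field_simps)
  also have "\<dots> \<le> social_cost game w1 w2 {eab, ebd} {eac, ece} / opt_cost game w1 w2"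
    using opt_cost_le[OF valid_game_game, of "{eac, ecd}" "{eab, ebe}" w1 w2] opt_cost_game_pos weights
      \<open>0 < poa_den w1 w2\<close> \<open>0 \<le> poa_num w1 w2\<close>
    by (intro divide_left_mono) (simp_all add: game_simps social_cost_game)
  finally have "ereal (poa_value w1 w2)
      \<le> ereal (social_cost game w1 w2 {eab, ebd} {eac, ece} / opt_cost game w1 w2)"
    by simp
  also have "\<dots> \<le> poa_inst game w1 w2"
    by (rule NE_ratio_le_poa_inst[OF is_NE_game])
  finally have "ereal (poa_value w1 w2) \<le> poa_inst game w1 w2" .
  moreover have "poa_inst game w1 w2 \<le> ereal (poa_value w1 w2)"
    using poa_inst_le_poa_value[OF valid_game_game] weights \<open>0 < w1\<close> opt_cost_game_pos by simp
  ultimately show ?thesis using valid_game_game opt_cost_game_pos by simp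
qed

end

lemma ex_game_attains_poa_value:
  assumes "0 < w2" "w2 \<le> w1"
  shows "valid_game (ex_game w1 w2) \<and> opt_cost (ex_game w1 w2) w1 w2 > 0
    \<and> poa_inst (ex_game w1 w2) w1 w2 = ereal (poa_value w1 w2)"
proof -
  interpret example_instance ex_arcs fst snd "(0, 1)" "(0, 2)" "(1, 3)" "(1, 4)" "(2, 3)" "(2, 4)"
    w1 w2 "ex_beta w1 w2"
    by unfold_locales (use assms in \<open>simp_all add: ex_arcs_def ex_beta_def\<close>)
  show ?thesis unfolding ex_game_def by (rule attains_poa_value)
qed

(* The same network with the arc (u, v) encoded as 5 u + v, since network_games requires arcs of
   type nat. *)
definition ex_game_nat :: "real \<Rightarrow> real \<Rightarrow> nat cgame" where
  "ex_game_nat w1 w2 = net_game {1, 2, 8, 9, 13, 14} (\<lambda>e. e div 5) (\<lambda>e. e mod 5) (\<lambda>_. 0)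
     (\<lambda>e. ex_beta w1 w2 (e div 5, e mod 5)) 0 3 0 4"

lemma ex_game_nat_attains_poa_value:
  assumes "0 < w2" "w2 \<le> w1"
  shows "ex_game_nat w1 w2 \<in> network_games \<and> opt_cost (ex_game_nat w1 w2) w1 w2 > 0
    \<and> poa_inst (ex_game_nat w1 w2) w1 w2 = ereal (poa_value w1 w2)"
proof -
  interpret example_instance "{1, 2, 8, 9, 13, 14}" "\<lambda>e::nat. e div 5" "\<lambda>e::nat. e mod 5" 1 2 8 9 13 14
    w1 w2 "\<lambda>e. ex_beta w1 w2 (e div 5, e mod 5)"
    by unfold_locales (use assms in \<open>simp_all add: ex_beta_def\<close>)
  have "ex_game_nat w1 w2 \<in> network_games"
    using valid_game_game unfolding network_games_def ex_game_nat_def by blast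
  then show ?thesis using attains_poa_value unfolding ex_game_nat_def by blast
qed

definition single_link_game :: "nat cgame" where
  "single_link_game = net_game {0} (\<lambda>_. 0 :: nat) (\<lambda>_. 1) (\<lambda>_. 0) (\<lambda>_. 1) 0 1 0 1"

lemma path_actions_single_link: "path_actions {0 :: nat} (\<lambda>_. 0 :: nat) (\<lambda>_. 1) 0 1 = {{0}}"
proof (intro equalityI subsetI)
  fix A assume "A \<in> path_actions {0 :: nat} (\<lambda>_. 0 :: nat) (\<lambda>_. 1) 0 1"
  then obtain es where A: "A = set es" and P: "is_path {0 :: nat} (\<lambda>_. 0 :: nat) (\<lambda>_. 1) 0 1 es"
    by (auto simp: path_actions_def)
  then have "es \<noteq> []" "set es \<subseteq> {0}" "distinct (0 # map (\<lambda>_. 1 :: nat) es)"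
    unfolding is_path_def by auto
  then have "es = [0]" by (cases es rule: remdups_adj.cases) auto
  then show "A \<in> {{0}}" using A by simp
next
  have "is_path {0 :: nat} (\<lambda>_. 0 :: nat) (\<lambda>_. 1) 0 1 [0]" by (simp add: is_path_def)
  then have "set [0] \<in> path_actions {0 :: nat} (\<lambda>_. 0 :: nat) (\<lambda>_. 1) 0 1"
    unfolding path_actions_def by blast
  then show "A \<in> path_actions {0 :: nat} (\<lambda>_. 0 :: nat) (\<lambda>_. 1) 0 1" if "A \<in> {{0}}" for A
    using that by simp
qed

lemma single_link_game_poa_inst_ge_1:
  assumes "0 \<le> w1" "0 \<le> w2" "0 < w1 + w2"
  shows "single_link_game \<in> network_games \<and> opt_cost single_link_game w1 w2 > 0
    \<and> ereal 1 \<le> poa_inst single_link_game w1 w2"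
proof -
  have game: "acts1 single_link_game = {{0}}" "acts2 single_link_game = {{0}}" "res single_link_game = {0}"
    "alpha single_link_game = (\<lambda>_. 0)" "beta single_link_game = (\<lambda>_. 1)"
    unfolding single_link_game_def net_game_def path_actions_single_link by simp_all
  have "valid_game single_link_game" by (simp add: valid_game_def game)
  then have "single_link_game \<in> network_games"
    unfolding network_games_def single_link_game_def by blast
  have cost: "social_cost single_link_game w1 w2 {0} {0} = (w1 + w2)\<^sup>2"
    by (simp add: social_cost_def cost1_def cost2_def load_def game power2_eq_square algebra_simps)
  then have opt: "opt_cost single_link_game w1 w2 = (w1 + w2)\<^sup>2"
    by (simp add: opt_cost_def game)
  have "is_NE single_link_game w1 w2 {0} {0}" by (simp add: is_NE_def game)
  from NE_ratio_le_poa_inst[OF this] have "ereal 1 \<le> poa_inst single_link_game w1 w2"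
    using assms unfolding cost opt by simp
  then show ?thesis using \<open>single_link_game \<in> network_games\<close> opt assms by simp
qed

lemma network_game_attaining_poa_value:
  assumes "0 \<le> w2" "w2 \<le> w1" "0 < w1"
  obtains G where "G \<in> network_games" "opt_cost G w1 w2 > 0"
    "ereal (poa_value w1 w2) \<le> poa_inst G w1 w2"
proof (cases "w2 = 0")
  case True
  then have "poa_value w1 w2 = 1" by (simp add: poa_value_def)
  then show ?thesis
    using that[of single_link_game] single_link_game_poa_inst_ge_1[of w1 w2] assms by simp
next
  case False
  then show ?thesis
    using that[of "ex_game_nat w1 w2"] ex_game_nat_attains_poa_value[of w2 w1] assms by simp
qed

lemma network_games_subset_all_games: "network_games \<subseteq> all_games"
  by (auto simp: network_games_def all_games_def)

lemma poa_classes_eq_poa_value: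
  assumes "0 \<le> w2" "w2 \<le> w1" "0 < w1"
  shows "poa_class all_games w1 w2 = ereal (poa_value w1 w2)
    \<and> poa_class network_games w1 w2 = ereal (poa_value w1 w2)"
proof -
  have "poa_class all_games w1 w2 \<le> ereal (poa_value w1 w2)"
    "poa_class network_games w1 w2 \<le> ereal (poa_value w1 w2)"
    using assms network_games_subset_all_games by (auto simp: all_games_def intro!: poa_class_le)
  moreover obtain G where G: "G \<in> network_games" "opt_cost G w1 w2 > 0"
    "ereal (poa_value w1 w2) \<le> poa_inst G w1 w2"
    using network_game_attaining_poa_value[OF assms] .
  then have "ereal (poa_value w1 w2) \<le> poa_class all_games w1 w2"
    "ereal (poa_value w1 w2) \<le> poa_class network_games w1 w2"
    using network_games_subset_all_games
    by (auto intro: order_trans[OF _ poa_inst_le_poa_class])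
  ultimately show ?thesis by simp
qed

theorem theorem2:
  fixes w1 w2 :: real
  assumes "w1 \<ge> 0" and "w2 \<ge> 0" and "w1 + w2 > 0"
  shows "poa_class all_games w1 w2 = ereal (poa_value w1 w2)
       \<and> poa_class network_games w1 w2 = ereal (poa_value w1 w2)
       \<and> (w1 \<ge> w2 \<and> w2 > 0 \<longrightarrow>
           valid_game (ex_game w1 w2) \<and> opt_cost (ex_game w1 w2) w1 w2 > 0
           \<and> poa_inst (ex_game w1 w2) w1 w2 = ereal (poa_value w1 w2))"
proof -
  have "poa_class all_games w1 w2 = ereal (poa_value w1 w2)
      \<and> poa_class network_games w1 w2 = ereal (poa_value w1 w2)"
  proof (cases "w2 \<le> w1")
    case True
    then show ?thesis using poa_classes_eq_poa_value assms by simp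
  next
    case False
    then have "poa_class all_games w2 w1 = ereal (poa_value w2 w1)
        \<and> poa_class network_games w2 w1 = ereal (poa_value w2 w1)"
      using poa_classes_eq_poa_value[of w1 w2] assms by simp
    then show ?thesis
      using poa_class_swap_players[OF swap_players_all_games]
        poa_class_swap_players[OF swap_players_network_games] poa_value_commute
      by metis
  qed
  then show ?thesis using ex_game_attains_poa_value by blast
qed

end
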